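(* For every integer $v\ge 2$, the $(v,2,1)$-BIBD on a $v$-set $X$ (whose blocks are all $2$-subsets of $X$) has a weak nesting $\phi:\mathcal{A}\to Y$ with $X\subseteq Y$ and $|Y|=w=\left\lceil \frac{5v-1}{4}\right\rceil$, and this is optimal, i.e. no weak nesting of this BIBD has $|Y|<\left\lceil \frac{5v-1}{4}\right\rceil$.
   Context: A $(v,k,\lambda)$-BIBD is a pair $(X,\mathcal{A})$ where $X$ is a set of $v$ points and $\mathcal{A}$ is a multiset of $k$-subsets of $X$ (blocks) such that every pair of distinct points lies in exactly $\lambda$ blocks. A partial $(w,k,\lambda)$-BIBD is defined in the same way on $w$ points, except that every pair lies in at most $\lambda$ blocks. Given a $(v,k,\lambda)$-BIBD $(X,\mathcal{A})$ and a set $Y\supseteq X$ with $|Y|=w$, a map $\phi:\mathcal{A}\to Y$ is a weak nesting if $\phi(A)\notin A$ for every block $A$ and the multiset $\{A\cup\{\phi(A)\}:A\in\mathcal{A}\}$ is a partial $(w,k+1,\lambda+1)$-BIBD on $Y$. A weak nesting is optimal if $w=|Y|$ is as small as possible. *)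

theory Defs
  imports Complex_Main "HOL-Library.Multiset"
begin

definition partial_bibd :: "'a set \<Rightarrow> nat \<Rightarrow> nat \<Rightarrow> 'a set multiset \<Rightarrow> bool" where
  "partial_bibd Y k lam B \<longleftrightarrow> finite Y \<and> (\<forall>A \<in># B. A \<subseteq> Y \<and> card A = k) \<and>
     (\<forall>x\<in>Y. \<forall>y\<in>Y. x \<noteq> y \<longrightarrow> size (filter_mset (\<lambda>A. x \<in> A \<and> y \<in> A) B) \<le> lam)"

definition bibd :: "'a set \<Rightarrow> nat \<Rightarrow> nat \<Rightarrow> 'a set multiset \<Rightarrow> bool" where
  "bibd X k lam B \<longleftrightarrow> finite X \<and> (\<forall>A \<in># B. A \<subseteq> X \<and> card A = k) \<and>
     (\<forall>x\<in>X. \<forall>y\<in>X. x \<noteq> y \<longrightarrow> size (filter_mset (\<lambda>A. x \<in> A \<and> y \<in> A) B) = lam)"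

definition pairs :: "'a set \<Rightarrow> 'a set set" where
  "pairs X = {A. A \<subseteq> X \<and> card A = 2}"

definition weak_nesting ::
  "'a set \<Rightarrow> nat \<Rightarrow> nat \<Rightarrow> 'a set set \<Rightarrow> 'a set \<Rightarrow> ('a set \<Rightarrow> 'a) \<Rightarrow> bool" where
  "weak_nesting X k lam \<A> Y \<phi> \<longleftrightarrow> X \<subseteq> Y \<and> (\<forall>A\<in>\<A>. \<phi> A \<in> Y \<and> \<phi> A \<notin> A) \<and>
     partial_bibd Y (k + 1) (lam + 1) (image_mset (\<lambda>A. insert (\<phi> A) A) (mset_set \<A>))"

end

theory Submission
  imports Defs "HOL-Library.Countable"
begin

(* Lower bound: a nested block is a triangle formed by a pair of X and its apex, so all three of its
   pairs meet X, and every pair of Y lies in at most two triangles.  Only C(v,2) + v |Y - X| pairs of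
   Y meet X, hence 3 C(v,2) <= 2 (C(v,2) + v |Y - X|), that is 4 |Y - X| >= v - 1.

   Construction: the points are Z_u, plus a point at infinity when 4 divides v (then u = v - 1), and
   K = (u - 1) div 4.  A pair {x, x + d} with odd d < 2K + 1 gets the apex x - (2K + 1 - d) / 2, so
   that its two new sides have cyclic lengths summing to 2K + 1; each pair of length at most 2K is a
   new side of only one such block.  For u = 4K + 3 the pair {x, infinity} gets the apex
   x + 2K + 1, creating a new side of length 2K + 1.  Each remaining cyclic length c gets its own
   fresh apex, which meets a point x of Z_u only in the triangles over {x, x + c} and {x - c, x}.
   This uses u div 2 - K fresh points, and v + u div 2 - K = ceiling ((5v - 1) / 4). *)

section \<open>Pairs and weak nestings\<close>

lemma finite_pairs: "finite X \<Longrightarrow> finite (pairs X)"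
  unfolding pairs_def by (rule finite_subset[of _ "Pow X"]) auto

lemma card_pairs: "finite X \<Longrightarrow> card (pairs X) = card X choose 2"
  unfolding pairs_def by (rule n_subsets)

lemma pairs_cases:
  assumes "A \<in> pairs X"
  obtains a b where "A = {a, b}" "a \<noteq> b" "a \<in> X" "b \<in> X"
  using assms unfolding pairs_def by (auto simp: card_2_iff)

lemma doubleton_in_pairs: "a \<in> X \<Longrightarrow> b \<in> X \<Longrightarrow> a \<noteq> b \<Longrightarrow> {a, b} \<in> pairs X"
  unfolding pairs_def by auto

lemma pairs_image:
  assumes "inj_on g X"
  shows "pairs (g ` X) = (`) g ` pairs X"
proof
  show "pairs (g ` X) \<subseteq> (`) g ` pairs X"
  proof
    fix B assume "B \<in> pairs (g ` X)"
    then obtain a b where "B = {g a, g b}" "g a \<noteq> g b" "a \<in> X" "b \<in> X"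
      by (elim pairs_cases) auto
    then show "B \<in> (`) g ` pairs X"
      by (intro image_eqI[of _ _ "{a, b}"] doubleton_in_pairs) auto
  qed
  show "(`) g ` pairs X \<subseteq> pairs (g ` X)"
    using assms by (auto elim!: pairs_cases intro!: doubleton_in_pairs simp: inj_on_eq_iff)
qed

lemma bibd_pairs: "finite X \<Longrightarrow> bibd X 2 1 (mset_set (pairs X))"
proof -
  assume X: "finite X"
  have "{A \<in> pairs X. x \<in> A \<and> y \<in> A} = {{x, y}}" if "x \<in> X" "y \<in> X" "x \<noteq> y" for x y
    using that by (auto elim!: pairs_cases intro: doubleton_in_pairs)
  then show ?thesis
    using X finite_pairs[OF X] unfolding bibd_def by (auto simp: pairs_def)
qed

lemma weak_nesting_iff:
  assumes "finite \<A>" and blocks: "\<forall>A\<in>\<A>. A \<subseteq> X \<and> finite A \<and> card A = k"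
  shows "weak_nesting X k lam \<A> Y \<phi> \<longleftrightarrow> finite Y \<and> X \<subseteq> Y \<and> (\<forall>A\<in>\<A>. \<phi> A \<in> Y \<and> \<phi> A \<notin> A) \<and>
    (\<forall>x\<in>Y. \<forall>y\<in>Y. x \<noteq> y \<longrightarrow> card {A\<in>\<A>. {x, y} \<subseteq> insert (\<phi> A) A} \<le> lam + 1)"
proof -
  have count: "size (filter_mset (\<lambda>B. x \<in> B \<and> y \<in> B) (image_mset (\<lambda>A. insert (\<phi> A) A) (mset_set \<A>)))
      = card {A\<in>\<A>. {x, y} \<subseteq> insert (\<phi> A) A}" for x y
    using \<open>finite \<A>\<close> by (simp add: filter_mset_image_mset)
  have nested_blocks: "(\<forall>B\<in>#image_mset (\<lambda>A. insert (\<phi> A) A) (mset_set \<A>). B \<subseteq> Y \<and> card B = k + 1)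
      \<longleftrightarrow> (\<forall>A\<in>\<A>. \<phi> A \<in> Y \<and> \<phi> A \<notin> A)" if "X \<subseteq> Y"
  proof -
    have "insert (\<phi> A) A \<subseteq> Y \<and> card (insert (\<phi> A) A) = k + 1 \<longleftrightarrow> \<phi> A \<in> Y \<and> \<phi> A \<notin> A"
      if "A \<in> \<A>" for A
      using blocks that \<open>X \<subseteq> Y\<close> by (auto simp: card_insert_if)
    then show ?thesis
      using \<open>finite \<A>\<close> by simp
  qed
  show ?thesis
  proof (cases "X \<subseteq> Y")
    case True
    then show ?thesis
      unfolding weak_nesting_def partial_bibd_def count nested_blocks[OF True] by auto
  qed (simp add: weak_nesting_def)
qed

lemma weak_nesting_pairs_iff:
  assumes "finite X"
  shows "weak_nesting X 2 lam (pairs X) Y \<phi> \<longleftrightarrow> finite Y \<and> X \<subseteq> Y \<and> (\<forall>A\<in>pairs X. \<phi> A \<in> Y \<and> \<phi> A \<notin> A) \<and>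
    (\<forall>x\<in>Y. \<forall>y\<in>Y. x \<noteq> y \<longrightarrow> card {A\<in>pairs X. {x, y} \<subseteq> insert (\<phi> A) A} \<le> lam + 1)"
  using assms by (intro weak_nesting_iff finite_pairs) (auto simp: pairs_def intro: finite_subset)

lemma partial_bibd_image:
  assumes "inj_on g Y" and "partial_bibd Y k lam \<B>"
  shows "partial_bibd (g ` Y) k lam (image_mset ((`) g) \<B>)"
proof -
  have blocks: "A \<subseteq> Y \<and> card A = k" if "A \<in># \<B>" for A
    using assms(2) that unfolding partial_bibd_def by blast
  have "size (filter_mset (\<lambda>B. g x \<in> B \<and> g y \<in> B) (image_mset ((`) g) \<B>))
      = size (filter_mset (\<lambda>A. x \<in> A \<and> y \<in> A) \<B>)" if "x \<in> Y" "y \<in> Y" for x y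
  proof -
    have "filter_mset (\<lambda>A. g x \<in> g ` A \<and> g y \<in> g ` A) \<B> = filter_mset (\<lambda>A. x \<in> A \<and> y \<in> A) \<B>"
      using blocks that assms(1) by (intro filter_mset_cong) (auto simp: inj_on_image_mem_iff)
    then show ?thesis
      by (simp add: filter_mset_image_mset)
  qed
  moreover have "g ` A \<subseteq> g ` Y \<and> card (g ` A) = k" if "A \<in># \<B>" for A
    using blocks[OF that] assms(1) by (auto simp: card_image inj_on_subset)
  ultimately show ?thesis
    using assms unfolding partial_bibd_def by (auto simp: inj_on_eq_iff)
qed

lemma weak_nesting_image:
  assumes "inj g" and "weak_nesting X k lam \<A> Y \<phi>"
  shows "weak_nesting (g ` X) k lam ((`) g ` \<A>) (g ` Y) (\<lambda>B. g (\<phi> (g -` B)))"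
proof -
  have "inj_on ((`) g) \<A>"
    using assms(1) by (simp add: inj_on_def inj_image_eq_iff)
  then have "image_mset (\<lambda>B. insert (g (\<phi> (g -` B))) B) (mset_set ((`) g ` \<A>))
      = image_mset ((`) g) (image_mset (\<lambda>A. insert (\<phi> A) A) (mset_set \<A>))"
    using assms(1) by (simp flip: image_mset_mset_set add: multiset.map_comp comp_def inj_vimage_image_eq)
  then show ?thesis
    using assms partial_bibd_image[of g Y] unfolding weak_nesting_def
    by (auto simp: inj_vimage_image_eq inj_image_mem_iff inj_on_subset)
qed

lemma double_counting_le:
  assumes "finite S" and "finite T" and "\<And>y. y \<in> T \<Longrightarrow> card {x\<in>S. R x y} \<le> m"
  shows "(\<Sum>x\<in>S. card {y\<in>T. R x y}) \<le> m * card T"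
proof -
  have "(\<Sum>x\<in>S. card {y\<in>T. R x y}) = (\<Sum>x\<in>S. \<Sum>y\<in>T. of_bool (R x y))"
    using assms(2) by (simp add: Int_def conj_commute)
  also have "\<dots> = (\<Sum>y\<in>T. \<Sum>x\<in>S. of_bool (R x y))"
    by (rule sum.swap)
  also have "\<dots> = (\<Sum>y\<in>T. card {x\<in>S. R x y})"
    using assms(1) by (simp add: Int_def conj_commute)
  also have "\<dots> \<le> m * card T"
    using sum_bounded_above[of T "\<lambda>y. card {x\<in>S. R x y}" m] assms(3) by (simp add: mult.commute)
  finally show ?thesis .
qed

section \<open>The lower bound\<close>

lemma card_pairs_triangle:
  assumes "A \<in> pairs X" and "z \<notin> A"
  shows "card (pairs (insert z A)) = 3"
proof -
  obtain a b where "A = {a, b}" "a \<noteq> b"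
    using assms(1) by (rule pairs_cases)
  then have "card (insert z A) = 3"
    using assms(2) by auto
  moreover from this have "finite (insert z A)"
    by (intro card_ge_0_finite) simp
  ultimately show ?thesis
    by (simp add: card_pairs choose_two)
qed

lemma card_pairs_meeting_le:
  assumes "finite X" "finite Y" "X \<subseteq> Y"
  shows "card {e \<in> pairs Y. e \<inter> X \<noteq> {}} \<le> card (pairs X) + card X * card (Y - X)"
proof -
  let ?M = "(\<lambda>(a, b). {a, b}) ` (X \<times> (Y - X))"
  have "{e \<in> pairs Y. e \<inter> X \<noteq> {}} \<subseteq> pairs X \<union> ?M"
    by (auto elim!: pairs_cases intro: doubleton_in_pairs)
  then have "card {e \<in> pairs Y. e \<inter> X \<noteq> {}} \<le> card (pairs X \<union> ?M)"
    using assms by (intro card_mono) (auto simp: finite_pairs)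
  also have "\<dots> \<le> card (pairs X) + card ?M"
    by (rule card_Un_le)
  also have "card ?M \<le> card X * card (Y - X)"
    using card_image_le[of "X \<times> (Y - X)" "\<lambda>(a, b). {a, b}"] assms
    by (simp add: card_cartesian_product)
  finally show ?thesis
    by simp
qed

lemma weak_nesting_pairs_lower_bound:
  assumes X: "finite X" and nesting: "weak_nesting X 2 1 (pairs X) Y \<phi>"
  shows "card X - 1 \<le> 4 * card (Y - X)"
proof -
  let ?P = "pairs X" and ?T = "\<lambda>A. insert (\<phi> A) A"
  have P: "finite ?P"
    using X by (rule finite_pairs)
  have Y: "finite Y" "X \<subseteq> Y" and \<phi>: "\<And>A. A \<in> ?P \<Longrightarrow> \<phi> A \<in> Y \<and> \<phi> A \<notin> A"
    and covered: "\<And>x y. x \<in> Y \<Longrightarrow> y \<in> Y \<Longrightarrow> x \<noteq> y \<Longrightarrow> card {A\<in>?P. {x, y} \<subseteq> ?T A} \<le> 2"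
    using nesting[unfolded weak_nesting_pairs_iff[OF X] one_add_one] by blast+
  define E where "E = {e \<in> pairs Y. e \<inter> X \<noteq> {}}"
  have E: "finite E"
    using Y by (simp add: E_def finite_pairs)
  have E_bound: "card E \<le> card ?P + card X * card (Y - X)"
    unfolding E_def using X Y by (rule card_pairs_meeting_le)
  have "(\<Sum>A\<in>?P. card {e\<in>E. e \<subseteq> ?T A}) \<le> 2 * card E"
  proof (rule double_counting_le[OF P E])
    fix e assume "e \<in> E"
    then obtain x y where "e = {x, y}" "x \<in> Y" "y \<in> Y" "x \<noteq> y"
      unfolding E_def by (blast elim: pairs_cases)
    then show "card {A\<in>?P. e \<subseteq> ?T A} \<le> 2"
      using covered by simp
  qed
  moreover have "card {e\<in>E. e \<subseteq> ?T A} = 3" if "A \<in> ?P" for A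
  proof -
    have "{e\<in>E. e \<subseteq> ?T A} = pairs (?T A)"
      using that \<phi>[OF that] Y unfolding E_def
      by (fastforce elim!: pairs_cases intro: doubleton_in_pairs)
    then show ?thesis
      using card_pairs_triangle[OF that] \<phi>[OF that] by simp
  qed
  ultimately have "3 * card ?P \<le> 2 * card E"
    by simp
  then have "card ?P \<le> 2 * (card X * card (Y - X))"
    using E_bound by linarith
  moreover have "2 * card ?P = card X * (card X - 1)"
    using times_binomial_minus1_eq[of 2 "card X"] by (simp add: card_pairs[OF X])
  ultimately have "card X * (card X - 1) \<le> card X * (4 * card (Y - X))"
    by linarith
  then show ?thesis
    by (cases "card X = 0") auto
qed

lemma weak_nesting_pairs_card_ge:
  assumes "finite X" and "weak_nesting X 2 1 (pairs X) Y \<phi>"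
  shows "card X + (card X + 2) div 4 \<le> card Y"
proof -
  have "finite Y" "X \<subseteq> Y"
    using assms unfolding weak_nesting_pairs_iff[OF assms(1)] by blast+
  then have "card Y = card X + card (Y - X)"
    using card_Diff_subset[OF finite_subset[OF \<open>X \<subseteq> Y\<close> \<open>finite Y\<close>] \<open>X \<subseteq> Y\<close>]
      card_mono[OF \<open>finite Y\<close> \<open>X \<subseteq> Y\<close>] by simp
  moreover have "card X - 1 \<le> 4 * card (Y - X)"
    using assms by (rule weak_nesting_pairs_lower_bound)
  ultimately show ?thesis
    by linarith
qed

section \<open>A cyclic weak nesting\<close>

lemma mod_add_mod_diff: "0 \<le> w \<Longrightarrow> w < u \<Longrightarrow> (z + (w - z) mod u) mod u = (w::int)"
  by (simp add: mod_add_right_eq)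

lemma mod_diff_of_less:
  assumes "0 \<le> p" "p < q" "q < u"
  shows "(p - q) mod u = u - (q - (p::int))"
proof -
  have "(p - q + u) mod u = p - q + u"
    using assms by (intro mod_pos_pos_trivial) auto
  then show ?thesis
    by simp
qed

lemma mod_offsets_from_shifted:
  assumes "0 < i" "0 < d" "i + d < u" "(b - a) mod u = (d::int)"
  shows "(a - (a - i) mod u) mod u = i" and "(b - (a - i) mod u) mod u = i + d"
proof -
  have "(b - (a - i) mod u) mod u = (b - a + i) mod u"
    by (simp add: mod_diff_right_eq algebra_simps)
  also have "\<dots> = ((b - a) mod u + i) mod u"
    by (simp add: mod_add_left_eq)
  finally show "(b - (a - i) mod u) mod u = i + d"
    using assms by simp
  show "(a - (a - i) mod u) mod u = i"
    using assms by (simp add: mod_diff_right_eq)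
qed

lemma add_mod_neq:
  assumes "0 < n" "n < u"
  shows "(x + n) mod u \<noteq> (x::int) mod u"
proof
  assume "(x + n) mod u = x mod u"
  then have "(x - (x + n) mod u) mod u = 0"
    by (simp add: mod_diff_right_eq)
  moreover have "(x - (x + n) mod u) mod u = (- n) mod u"
    by (simp add: mod_diff_right_eq)
  ultimately show False
    using assms by (simp add: zmod_zminus1_eq_if)
qed

lemma card_subset_doubleton_le: "S \<subseteq> {a, b} \<Longrightarrow> card S \<le> 2"
  by (rule order_trans[OF card_mono]) (auto simp: card_insert_if)

(* The base points are 0, ..., v - 1.  When v = u + 1 the point u plays the role of infinity, and
   the fresh apex serving the cyclic length c is the point v + c. *)
locale cyclic_nesting =
  fixes u K v :: int
  assumes K_nonneg: "0 \<le> K"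
    and u_large: "4 * K + 1 \<le> u"
    and v_cases: "v = u \<or> v = u + 1 \<and> u = 4 * K + 3"
begin

definition fresh_diffs :: "int set" where
  "fresh_diffs = (\<lambda>j. 2 * j) ` {1..K} \<union> {2 * K + 1..u div 2}"

definition apex :: "int \<Rightarrow> int \<Rightarrow> int" where
  "apex x y =
    (if y = u then (x + u div 2) mod u
     else if odd (y - x) \<and> y - x < 2 * K + 1 then (x - (2 * K + 1 - (y - x)) div 2) mod u
     else if odd (u - (y - x)) \<and> u - (y - x) < 2 * K + 1 then (y - (2 * K + 1 - (u - (y - x))) div 2) mod u
     else v + min (y - x) (u - (y - x)))"

definition short_apex :: "int \<Rightarrow> int \<Rightarrow> int \<Rightarrow> bool" where
  "short_apex x y z \<longleftrightarrow> 0 \<le> z \<and> z < u \<and> 0 < (x - z) mod u \<and> 0 < (y - z) mod u \<and>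
    (x - z) mod u + (y - z) mod u = 2 * K + 1"

definition nest :: "int set \<Rightarrow> int" where
  "nest A = apex (Min A) (Max A)"

definition points :: "int set" where
  "points = {0..<v} \<union> (+) v ` fresh_diffs"

(* For 0 <= p < q < u this is the only block other than {p, q} whose nested triple can contain both
   p and q: its apex must be p or q, and the cyclic length q - p decides which. *)
definition covering_block :: "int \<Rightarrow> int \<Rightarrow> int set" where
  "covering_block p q =
    (if q - p \<le> 2 * K then {q, (p + (2 * K + 1 - (q - p))) mod u}
     else if u - (q - p) \<le> 2 * K then {p, (q + (2 * K + 1 - (u - (q - p)))) mod u}
     else if q - p = u div 2 then {p, u} else {q, u})"

definition blocks_through :: "int \<Rightarrow> int \<Rightarrow> int set set" where
  "blocks_through p q = {A \<in> pairs {0..<v}. {p, q} \<subseteq> insert (nest A) A}"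

lemma u_pos: "0 < u"
  using K_nonneg u_large by simp

lemma u_le_v: "u \<le> v" and v_le_Suc_u: "v \<le> u + 1"
  using v_cases by auto

lemma points_cases:
  assumes "p \<in> points"
  obtains (base) "0 \<le> p" "p < v" | (fresh) c where "c \<in> fresh_diffs" "p = v + c"
  using assms unfolding points_def by auto

lemma fresh_diffs_bounds: "c \<in> fresh_diffs \<Longrightarrow> 1 \<le> c \<and> c \<le> u div 2"
  using K_nonneg u_large unfolding fresh_diffs_def by auto

lemma fresh_diffsI:
  assumes "1 \<le> c" "c \<le> u div 2" "\<not> (odd c \<and> c < 2 * K + 1)"
  shows "c \<in> fresh_diffs"
proof (cases "c < 2 * K + 1")
  case True
  with assms obtain j where "c = 2 * j" "j \<in> {1..K}"
    by (auto elim!: evenE)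
  then show ?thesis
    unfolding fresh_diffs_def by auto
qed (use assms in \<open>auto simp: fresh_diffs_def\<close>)

lemma short_apex_commute: "short_apex x y z \<longleftrightarrow> short_apex y x z"
  unfolding short_apex_def by auto

lemma short_apex_shifted:
  assumes "odd ((b - a) mod u)" "(b - a) mod u < 2 * K + 1"
  shows "short_apex a b ((a - (2 * K + 1 - (b - a) mod u) div 2) mod u)"
proof -
  define i where "i = (2 * K + 1 - (b - a) mod u) div 2"
  have i: "2 * i = 2 * K + 1 - (b - a) mod u"
    using assms(1) unfolding i_def by auto
  then have "0 < i"
    using assms(2) by linarith
  moreover have "0 < (b - a) mod u"
    using assms(1) u_pos by (metis even_zero order_le_less pos_mod_sign)
  ultimately show ?thesis
    using i mod_offsets_from_shifted[of i "(b - a) mod u" u b a] u_pos u_large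
    unfolding short_apex_def i_def [symmetric] by auto
qed

lemma apex_cases:
  assumes "0 \<le> x" "x < y" "y < v"
  obtains (short) "y < u" "short_apex x y (apex x y)"
    | (infinite) "y = u" "v = u + 1" "apex x y = (x + u div 2) mod u"
    | (fresh) c where "y < u" "c \<in> fresh_diffs" "apex x y = v + c"
      "(y - x) mod u = c \<or> (x - y) mod u = c"
proof -
  have y: "y < u" if "y \<noteq> u"
    using that assms(3) v_le_Suc_u by simp
  consider "y = u"
    | "y \<noteq> u" "odd (y - x) \<and> y - x < 2 * K + 1"
    | "y \<noteq> u" "\<not> (odd (y - x) \<and> y - x < 2 * K + 1)" "odd (u - (y - x)) \<and> u - (y - x) < 2 * K + 1"
    | "y \<noteq> u" "\<not> (odd (y - x) \<and> y - x < 2 * K + 1)" "\<not> (odd (u - (y - x)) \<and> u - (y - x) < 2 * K + 1)"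
    by blast
  then show thesis
  proof cases
    case 1
    show thesis
    proof (rule infinite)
      show "v = u + 1"
        using 1 assms v_cases by auto
    qed (use 1 in \<open>simp_all add: apex_def\<close>)
  next
    case 2
    then have "(y - x) mod u = y - x"
      using assms y by simp
    then have "short_apex x y (apex x y)"
      using 2 short_apex_shifted[of y x] by (simp add: apex_def)
    then show thesis
      using short y 2 by blast
  next
    case 3
    have "(x - y) mod u = u - (y - x)"
      using assms(1,2) y[OF 3(1)] by (rule mod_diff_of_less)
    moreover have "apex x y = (y - (2 * K + 1 - (u - (y - x))) div 2) mod u"
      unfolding apex_def by (simp only: if_not_P[OF 3(1)] if_not_P[OF 3(2)] if_P[OF 3(3)])
    ultimately have "short_apex x y (apex x y)"
      using 3 short_apex_shifted[of x y] short_apex_commute by simp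
    then show thesis
      using short y 3 by blast
  next
    case 4
    define c where "c = min (y - x) (u - (y - x))"
    have "c \<in> fresh_diffs"
      using 4 assms y by (intro fresh_diffsI) (auto simp: c_def min_def)
    moreover have "(y - x) mod u = c \<or> (x - y) mod u = c"
      using 4 assms y mod_diff_of_less[of x y u] by (auto simp: c_def min_def)
    moreover have "apex x y = v + c"
      unfolding apex_def c_def by (simp only: if_not_P[OF 4(1)] if_not_P[OF 4(2)] if_not_P[OF 4(3)])
    ultimately show thesis
      using fresh y 4 by blast
  qed
qed

lemma nest_cases:
  assumes "A \<in> pairs {0..<v}"
  obtains x y where "A = {x, y}" "0 \<le> x" "x < y" "y < v" "nest A = apex x y"
proof -
  obtain a b where ab: "A = {a, b}" "a \<noteq> b" "a \<in> {0..<v}" "b \<in> {0..<v}"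
    using assms by (rule pairs_cases)
  show thesis
  proof (cases "a < b")
    case True
    then show thesis
      using that[of a b] ab by (simp add: nest_def)
  next
    case False
    then show thesis
      using that[of b a] ab by (simp add: nest_def insert_commute)
  qed
qed

lemma nest_mem:
  assumes "A \<in> pairs {0..<v}"
  shows "nest A \<in> points" and "nest A \<notin> A"
proof -
  obtain x y where xy: "A = {x, y}" "0 \<le> x" "x < y" "y < v" and z: "nest A = apex x y"
    using assms by (rule nest_cases)
  have "apex x y \<in> points \<and> apex x y \<notin> {x, y}"
    using xy(2-4)
  proof (cases rule: apex_cases)
    case short
    then show ?thesis
      using v_cases by (auto simp: points_def short_apex_def)
  next
    case infinite
    have "u = 4 * K + 3"
      using infinite v_cases by auto
    then have "u div 2 = 2 * K + 1"
      by presburger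
    then have "apex x y \<noteq> x"
      using infinite xy add_mod_neq[of "u div 2" u x] K_nonneg by auto
    moreover have "0 \<le> apex x y" "apex x y < u" "u < v"
      using infinite u_pos by simp_all
    ultimately show ?thesis
      using infinite(1) by (auto simp: points_def)
  next
    case (fresh c)
    then show ?thesis
      using xy fresh_diffs_bounds[of c] by (auto simp: points_def)
  qed
  then show "nest A \<in> points" "nest A \<notin> A"
    using xy z by auto
qed

lemma blocks_through_sym: "blocks_through p q = blocks_through q p"
  unfolding blocks_through_def by auto

lemma blocks_throughE:
  assumes "A \<in> blocks_through p q"
  obtains x y where "A = {x, y}" "0 \<le> x" "x < y" "y < v" "p \<in> {x, y, apex x y}" "q \<in> {x, y, apex x y}"
proof -
  have "A \<in> pairs {0..<v}"
    using assms by (simp add: blocks_through_def)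
  then obtain x y where "A = {x, y}" "0 \<le> x" "x < y" "y < v" "nest A = apex x y"
    by (rule nest_cases)
  then show thesis
    using that assms by (auto simp: blocks_through_def)
qed

lemma short_block_eq:
  assumes "0 \<le> x" "x < y" "y < u" and "short_apex x y z" and "a \<in> {x, y}"
  shows "{x, y} = {a, (z + (2 * K + 1 - (a - z) mod u)) mod u}" and "(a - z) mod u \<le> 2 * K"
proof -
  obtain b where b: "{x, y} = {a, b}" "b \<in> {x, y}" "(b - z) mod u = 2 * K + 1 - (a - z) mod u"
    "0 < (b - z) mod u"
  proof (cases "a = x")
    case True
    then show thesis
      using that[of y] assms by (auto simp: short_apex_def)
  next
    case False
    then show thesis
      using that[of x] assms by (auto simp: insert_commute short_apex_def)
  qed
  have "b = (z + (b - z) mod u) mod u"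
    using b(2) assms(1-3) mod_add_mod_diff[of b u z] by auto
  then show "{x, y} = {a, (z + (2 * K + 1 - (a - z) mod u)) mod u}"
    using b(1,3) by simp
  show "(a - z) mod u \<le> 2 * K"
    using b(3,4) by simp
qed

lemma apex_through_infinity:
  assumes "0 \<le> x" "x < y" "y < v" and "u \<in> {x, y, apex x y}"
  shows "y = u" "v = u + 1" "apex x y = (x + u div 2) mod u"
proof -
  have "y = u"
    using assms(1-3)
  proof (cases rule: apex_cases)
    case short
    then have "u \<notin> {x, y, apex x y}"
      using assms(2) by (auto simp: short_apex_def)
    then show ?thesis
      using assms(4) by blast
  next
    case infinite
    then show ?thesis
      by simp
  next
    case (fresh c)
    then have "u \<notin> {x, y, apex x y}"
      using assms(2) fresh_diffs_bounds[of c] v_cases by auto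
    then show ?thesis
      using assms(4) by blast
  qed
  with assms(1-3) show "y = u" "v = u + 1" "apex x y = (x + u div 2) mod u"
    by (cases rule: apex_cases; simp)+
qed

lemma card_blocks_through_infinity_le:
  assumes "0 \<le> p" "p < u" "v = u + 1"
  shows "card (blocks_through p u) \<le> 2"
proof -
  have "blocks_through p u \<subseteq> {{p, u}, {(p - u div 2) mod u, u}}"
  proof
    fix A assume "A \<in> blocks_through p u"
    then obtain x y where A: "A = {x, y}" "0 \<le> x" "x < y" "y < v"
      and p: "p \<in> {x, y, apex x y}" and u: "u \<in> {x, y, apex x y}"
      by (rule blocks_throughE)
    have y: "y = u" and z: "apex x y = (x + u div 2) mod u"
      using apex_through_infinity[OF A(2-4) u] by simp_all
    then consider "p = x" | "p = (x + u div 2) mod u"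
      using p assms by auto
    then show "A \<in> {{p, u}, {(p - u div 2) mod u, u}}"
    proof cases
      case 2
      then have "(p - u div 2) mod u = x"
        using A y by (simp add: mod_diff_left_eq)
      then show ?thesis
        using A y by simp
    qed (use A y in simp)
  qed
  then show ?thesis
    by (rule card_subset_doubleton_le)
qed

lemma apex_eq_freshD:
  assumes "0 \<le> x" "x < y" "y < v" and "apex x y = v + c" and "0 \<le> c"
  shows "y < u" and "(y - x) mod u = c \<or> (x - y) mod u = c"
proof -
  have "y < u \<and> ((y - x) mod u = c \<or> (x - y) mod u = c)"
    using assms(1-3)
  proof (cases rule: apex_cases)
    case short
    then show ?thesis
      using assms(4,5) u_le_v by (simp add: short_apex_def)
  next
    case infinite
    then have "apex x y < u"
      using u_pos by simp
    then show ?thesis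
      using assms(4,5) u_le_v by simp
  next
    case (fresh c')
    then show ?thesis
      using assms(4) by auto
  qed
  then show "y < u" and "(y - x) mod u = c \<or> (x - y) mod u = c"
    by auto
qed

lemma card_blocks_through_fresh_le:
  assumes "0 \<le> p" "p < u" "c \<in> fresh_diffs"
  shows "card (blocks_through p (v + c)) \<le> 2"
proof -
  have c: "1 \<le> c"
    using fresh_diffs_bounds[OF assms(3)] by simp
  have "blocks_through p (v + c) \<subseteq> {{p, (p + c) mod u}, {p, (p - c) mod u}}"
  proof
    fix A assume "A \<in> blocks_through p (v + c)"
    then obtain x y where A: "A = {x, y}" "0 \<le> x" "x < y" "y < v"
      and p: "p \<in> {x, y, apex x y}" and q: "v + c \<in> {x, y, apex x y}"
      by (rule blocks_throughE)
    have z: "apex x y = v + c"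
      using q A c by auto
    have y: "y < u" and d: "(y - x) mod u = c \<or> (x - y) mod u = c"
      using apex_eq_freshD[OF A(2-4) z] c by simp_all
    have "p \<noteq> apex x y"
      using z c assms(2) u_le_v by simp
    then have "p \<in> {x, y}"
      using p by simp
    then obtain w where w: "A = {p, w}" "0 \<le> w" "w < u" "(w - p) mod u = c \<or> (p - w) mod u = c"
    proof
      assume "p = x"
      then show thesis
        using that[of y] A d y by simp
    next
      assume "p \<in> {y}"
      then show thesis
        using that[of x] A d y by (auto simp: insert_commute)
    qed
    moreover have "w = (p + (w - p) mod u) mod u" "w = (p - (p - w) mod u) mod u"
      using w(2,3) by (simp_all add: mod_add_right_eq mod_diff_right_eq)
    ultimately show "A \<in> {{p, (p + c) mod u}, {p, (p - c) mod u}}"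
      by auto
  qed
  then show ?thesis
    by (rule card_subset_doubleton_le)
qed

lemma blocks_through_beyond_empty:
  assumes "u \<le> p" "p < q" "v \<le> q"
  shows "blocks_through p q = {}"
proof (rule ccontr)
  assume "blocks_through p q \<noteq> {}"
  then obtain A where "A \<in> blocks_through p q"
    by blast
  then obtain x y where A: "A = {x, y}" "0 \<le> x" "x < y" "y < v"
    and p: "p \<in> {x, y, apex x y}" and q: "q \<in> {x, y, apex x y}"
    by (rule blocks_throughE)
  have "q = apex x y"
    using q A assms by auto
  then have "p = y" "y = u"
    using p A assms v_cases by auto
  then have "apex x y < u"
    using apex_through_infinity[OF A(2-4)] u_pos by simp
  then show False
    using \<open>q = apex x y\<close> assms by simp
qed

lemma short_apex_block_eq:
  assumes "0 \<le> p" "p < q" "q < u" and "0 \<le> x" "x < y" "y < u" and "short_apex x y z"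
    and "z \<in> {p, q}" "p \<in> {x, y, z}" "q \<in> {x, y, z}"
  shows "{x, y} = covering_block p q"
proof (cases "z = p")
  case True
  have "(q - p) mod u = q - p"
    using assms(1-3) by simp
  then have "{x, y} = {q, (p + (2 * K + 1 - (q - p))) mod u}" "q - p \<le> 2 * K"
    using short_block_eq[OF assms(4-7), of q] True assms(2,10) by auto
  then show ?thesis
    by (simp add: covering_block_def)
next
  case False
  then have z: "z = q"
    using assms(8) by simp
  have "(p - q) mod u = u - (q - p)"
    using assms(1-3) by (rule mod_diff_of_less)
  then have "{x, y} = {p, (q + (2 * K + 1 - (u - (q - p)))) mod u}" "u - (q - p) \<le> 2 * K"
    using short_block_eq[OF assms(4-7), of p] z assms(2,9) by auto
  then show ?thesis
    using u_large by (simp add: covering_block_def)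
qed

lemma infinite_apex_block_eq:
  assumes "0 \<le> p" "p < q" "q < u" and "u = 4 * K + 3"
    and "p \<in> {x, (x + u div 2) mod u}" "q \<in> {x, (x + u div 2) mod u}"
  shows "{x, u} = covering_block p q"
proof -
  have n: "u div 2 = 2 * K + 1"
    using assms(4) by presburger
  then have "0 < u div 2" "u div 2 < u"
    using assms(4) K_nonneg by simp_all
  then have "((x + u div 2) mod u - x) mod u = u div 2" "(x - (x + u div 2) mod u) mod u = u - u div 2"
    by (simp_all add: mod_diff_left_eq mod_diff_right_eq zmod_zminus1_eq_if)
  moreover have "(q - p) mod u = q - p"
    using assms(1-3) by simp
  moreover have "p = x \<and> q = (x + u div 2) mod u \<or> p = (x + u div 2) mod u \<and> q = x"
    using assms(2,5,6) by auto
  ultimately consider "q - p = u div 2" "x = p" | "q - p = u - u div 2" "x = q"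
    by auto
  then show ?thesis
  proof cases
    case 1
    then have "\<not> q - p \<le> 2 * K" "\<not> u - (q - p) \<le> 2 * K"
      using n assms(4) by linarith+
    then show ?thesis
      using 1 unfolding covering_block_def by simp
  next
    case 2
    then have "\<not> q - p \<le> 2 * K" "\<not> u - (q - p) \<le> 2 * K" "q - p \<noteq> u div 2"
      using n assms(4) by linarith+
    then show ?thesis
      using 2 unfolding covering_block_def by simp
  qed
qed

lemma card_blocks_through_inner_le:
  assumes "0 \<le> p" "p < q" "q < u"
  shows "card (blocks_through p q) \<le> 2"
proof -
  have "blocks_through p q \<subseteq> {{p, q}, covering_block p q}"
  proof
    fix A assume "A \<in> blocks_through p q"
    then obtain x y where A: "A = {x, y}" "0 \<le> x" "x < y" "y < v"
      and p: "p \<in> {x, y, apex x y}" and q: "q \<in> {x, y, apex x y}"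
      by (rule blocks_throughE)
    show "A \<in> {{p, q}, covering_block p q}"
    proof (cases "apex x y \<in> {p, q}")
      case False
      then show ?thesis
        using A p q assms by auto
    next
      case True
      from A(2-4) show ?thesis
      proof (cases rule: apex_cases)
        case short
        then show ?thesis
          using short_apex_block_eq[OF assms A(2,3) short True p q] A(1) by simp
      next
        case infinite
        have "u = 4 * K + 3"
          using infinite(2) v_cases by simp
        moreover have "p \<in> {x, (x + u div 2) mod u}" "q \<in> {x, (x + u div 2) mod u}"
          using p q infinite(1,3) assms by auto
        ultimately show ?thesis
          using infinite_apex_block_eq[OF assms] A(1) infinite(1) by simp
      next
        case (fresh c)
        then show ?thesis
          using True fresh_diffs_bounds[OF fresh(2)] assms u_le_v by auto
      qed
    qed
  qed
  then show ?thesis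
    by (rule card_subset_doubleton_le)
qed

lemma points_nonneg:
  assumes "p \<in> points"
  shows "0 \<le> p"
  using assms
proof (cases rule: points_cases)
  case (fresh c)
  then show ?thesis
    using fresh_diffs_bounds[of c] u_le_v u_pos by simp
qed

lemma card_blocks_through_ordered_le:
  assumes "p \<in> points" "q \<in> points" "p < q"
  shows "card (blocks_through p q) \<le> 2"
proof -
  have p: "0 \<le> p"
    using assms(1) by (rule points_nonneg)
  consider "q < u" | "q = u" "v = u + 1" | c where "c \<in> fresh_diffs" "q = v + c"
    using assms(2) u_le_v v_le_Suc_u by (cases rule: points_cases) fastforce+
  then show ?thesis
  proof cases
    case 1
    then show ?thesis
      using card_blocks_through_inner_le p assms(3) by simp
  next
    case 2
    then show ?thesis
      using card_blocks_through_infinity_le p assms(3) by simp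
  next
    case (3 c)
    show ?thesis
    proof (cases "p < u")
      case True
      then show ?thesis
        using card_blocks_through_fresh_le[OF p True 3(1)] 3(2) by simp
    next
      case False
      then show ?thesis
        using blocks_through_beyond_empty[of p q] assms(3) 3 fresh_diffs_bounds by force
    qed
  qed
qed

lemma weak_nesting_points: "weak_nesting {0..<v} 2 1 (pairs {0..<v}) points nest"
proof -
  have "finite points"
    by (simp add: points_def fresh_diffs_def)
  moreover have "{0..<v} \<subseteq> points"
    by (simp add: points_def)
  moreover have "card (blocks_through p q) \<le> 2" if "p \<in> points" "q \<in> points" "p \<noteq> q" for p q
  proof (cases "p < q")
    case False
    then have "q < p"
      using that(3) by simp
    then show ?thesis
      using card_blocks_through_ordered_le[OF that(2,1)] blocks_through_sym[of p q] by simp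
  qed (use that card_blocks_through_ordered_le in simp)
  ultimately show ?thesis
    unfolding weak_nesting_pairs_iff[OF finite_atLeastLessThan_int] one_add_one blocks_through_def[symmetric]
    using nest_mem by blast
qed

lemma card_fresh_diffs: "int (card fresh_diffs) = u div 2 - K"
proof -
  have "card fresh_diffs = card ((\<lambda>j. 2 * j) ` {1..K}) + card {2 * K + 1..u div 2}"
    unfolding fresh_diffs_def by (intro card_Un_disjoint) auto
  also have "card ((\<lambda>j. 2 * j) ` {1..K}) = card {1..K}"
    by (intro card_image) (auto simp: inj_on_def)
  finally have "card fresh_diffs = nat K + nat (u div 2 - 2 * K)"
    by simp
  moreover have "2 * K \<le> u div 2"
    using u_large by linarith
  ultimately show ?thesis
    using K_nonneg by simp
qed

lemma card_points: "int (card points) = v + u div 2 - K"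
proof -
  have "{0..<v} \<inter> (+) v ` fresh_diffs = {}"
    using fresh_diffs_bounds by fastforce
  then have "card points = card {0..<v} + card ((+) v ` fresh_diffs)"
    unfolding points_def by (intro card_Un_disjoint) (simp_all add: fresh_diffs_def)
  also have "card ((+) v ` fresh_diffs) = card fresh_diffs"
    by (intro card_image) simp
  finally show ?thesis
    using card_fresh_diffs u_le_v u_pos by simp
qed

end

section \<open>Weak nestings of every size\<close>

lemma cyclic_nesting_exists:
  assumes "2 \<le> v"
  obtains u K where "cyclic_nesting u K v" "u div 2 - K = (v + 2) div 4"
proof -
  define t where "t = v div 4"
  have v: "v = 4 * t + v mod 4"
    by (simp add: t_def)
  consider "v mod 4 = 0" | "v mod 4 = 1" | "v mod 4 = 2" | "v mod 4 = 3"
    by linarith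
  then show thesis
  proof cases
    case 1
    have "(4 * t - 1) div 2 = 2 * t - 1" "(4 * t + 2) div 4 = t"
      by presburger+
    then show thesis
      using v 1 assms by (intro that[of "4 * t - 1" "t - 1"]) (auto simp: cyclic_nesting_def)
  next
    case 2
    have "(4 * t + 1) div 2 = 2 * t" "(4 * t + 1 + 2) div 4 = t"
      by presburger+
    then show thesis
      using v 2 assms by (intro that[of v t]) (auto simp: cyclic_nesting_def)
  next
    case 3
    have "(4 * t + 2) div 2 = 2 * t + 1" "(4 * t + 2 + 2) div 4 = t + 1"
      by presburger+
    then show thesis
      using v 3 assms by (intro that[of v t]) (auto simp: cyclic_nesting_def)
  next
    case 4
    have "(4 * t + 3) div 2 = 2 * t + 1" "(4 * t + 3 + 2) div 4 = t + 1"
      by presburger+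
    then show thesis
      using v 4 assms by (intro that[of v t]) (auto simp: cyclic_nesting_def)
  qed
qed

lemma nat_ceiling_five_quarters: "nat \<lceil>(5 * real v - 1) / 4\<rceil> = v + (v + 2) div 4"
proof -
  define q where "q = (v + 2) div 4"
  have "4 * q \<le> v + 2" "v + 2 \<le> 4 * q + 3"
    unfolding q_def by linarith+
  then have "4 * real q \<le> real v + 2" "real v + 2 \<le> 4 * real q + 3"
    by (simp_all flip: of_nat_le_iff)
  then have "\<lceil>(5 * real v - 1) / 4\<rceil> = int (v + q)"
    by (intro ceiling_unique) simp_all
  then show ?thesis
    by (simp add: q_def)
qed

lemma obtain_inj_with_image:
  fixes S :: "'b::countable set" and X :: "'a set"
  assumes "infinite (UNIV :: 'a set)" and "finite S" and "finite X" and "card S = card X"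
  obtains g :: "'b \<Rightarrow> 'a" where "inj g" and "g ` S = X"
proof -
  obtain b where b: "bij_betw b S X"
    using finite_same_card_bij assms(2-4) by blast
  obtain h :: "nat \<Rightarrow> 'a" where h: "inj h" "range h \<subseteq> - X"
    using infinite_countable_subset[of "- X"] assms(1,3) by auto
  define g where "g i = (if i \<in> S then b i else h (to_nat i))" for i
  have "inj g"
  proof (rule injI)
    fix i j assume "g i = g j"
    moreover have "g i \<in> X \<longleftrightarrow> i \<in> S" for i
      using b h unfolding g_def bij_betw_def by auto
    ultimately show "i = j"
      using b h unfolding g_def bij_betw_def by (auto split: if_splits simp: inj_on_eq_iff inj_eq)
  qed
  moreover have "g ` S = X"
    using b unfolding g_def bij_betw_def by auto
  ultimately show thesis
    by (rule that)
qed

lemma weak_nesting_pairs_exists: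
  fixes X :: "'a set"
  assumes "infinite (UNIV :: 'a set)" and "finite X" and "2 \<le> card X"
  shows "\<exists>Y \<phi>. card Y = card X + (card X + 2) div 4 \<and> weak_nesting X 2 1 (pairs X) Y \<phi>"
proof -
  let ?v = "int (card X)"
  obtain u K where params: "cyclic_nesting u K ?v" and size: "u div 2 - K = (?v + 2) div 4"
    using assms(3) cyclic_nesting_exists[of ?v] by auto
  interpret cyclic_nesting u K ?v
    by (fact params)
  obtain g :: "int \<Rightarrow> 'a" where g: "inj g" "g ` {0..<?v} = X"
    by (rule obtain_inj_with_image[OF assms(1) _ assms(2), of "{0..<?v}"]) auto
  have "weak_nesting X 2 1 (pairs X) (g ` points) (\<lambda>B. g (nest (g -` B)))"
    using weak_nesting_image[OF g(1) weak_nesting_points] pairs_image[of g "{0..<?v}"] g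
    by (simp add: inj_on_subset)
  moreover have "int (card (g ` points)) = ?v + (?v + 2) div 4"
    using card_points size g(1) by (simp add: card_image inj_on_subset)
  then have "card (g ` points) = card X + (card X + 2) div 4"
    by (simp add: zdiv_int)
  ultimately show ?thesis
    by blast
qed

theorem theorem2p1:
  fixes X :: "'a set" and v :: nat
  assumes "infinite (UNIV :: 'a set)" and "finite X" and "card X = v" and "v \<ge> 2"
  shows "bibd X 2 1 (mset_set (pairs X))
    \<and> (\<exists>Y \<phi>. card Y = nat \<lceil>(5 * real v - 1) / 4\<rceil> \<and> weak_nesting X 2 1 (pairs X) Y \<phi>)
    \<and> (\<forall>Y \<phi>. weak_nesting X 2 1 (pairs X) Y \<phi> \<longrightarrow> nat \<lceil>(5 * real v - 1) / 4\<rceil> \<le> card Y)"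
proof -
  have "\<exists>Y \<phi>. card Y = v + (v + 2) div 4 \<and> weak_nesting X 2 1 (pairs X) Y \<phi>"
    using weak_nesting_pairs_exists[OF assms(1,2)] assms(3,4) by simp
  moreover have "\<forall>Y \<phi>. weak_nesting X 2 1 (pairs X) Y \<phi> \<longrightarrow> v + (v + 2) div 4 \<le> card Y"
    using weak_nesting_pairs_card_ge[OF assms(2)] assms(3) by blast
  ultimately show ?thesis
    unfolding nat_ceiling_five_quarters using bibd_pairs[OF assms(2)] by blast
qed

end
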